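(* Let $|\psi\rangle$ be an $n$-qubit pure state and let $s\subseteq[n]$. Suppose that for every $X\in\mathcal{P}(s)$ with $X\neq\emptyset$ the subsystems $X$ and $X^c$ carry equispaced nondegenerate Hamiltonians $H_X=\sum_{j=0}^{d_X-1} j\,\epsilon^X|\epsilon_j^X\rangle\langle\epsilon_j^X|$ and $H_{X^c}=\sum_{j=0}^{d_{X^c}-1} j\,\epsilon^{X^c}|\epsilon_j^{X^c}\rangle\langle\epsilon_j^{X^c}|$ with $\epsilon^X,\epsilon^{X^c}>0$ and $d_X=\dim\mathcal{H}_X$, $d_{X^c}=\dim\mathcal{H}_{X^c}$, and the bipartite system $X|X^c$ carries $H_X\otimes\mathbb{I}+\mathbb{I}\otimes H_{X^c}$. Then $$M^{(s)}_B(|\psi\rangle)=2\,M^{(s)}_E(|\psi\rangle);$$ more precisely, $\Delta^{cg}_{X|X^c}(|\psi\rangle)=2\Delta_{X|X^c}(|\psi\rangle)$ for every such $X$.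
   Context: For a system with Hamiltonian $H=\sum_j\epsilon_j|\epsilon_j\rangle\langle\epsilon_j|$, eigenvalues ordered $\epsilon_0=0\le\epsilon_1\le\cdots\le\epsilon_{d-1}$, and a state $\rho$ with eigenvalues $p_0\ge p_1\ge\cdots\ge p_{d-1}$: the passive state is $\rho^p=\sum_j p_j|\epsilon_j\rangle\langle\epsilon_j|$ (minimal energy in the unitary orbit of $\rho$) and the active state is $\rho^{ac}=\sum_j p_{d-1-j}|\epsilon_j\rangle\langle\epsilon_j|$ (maximal energy in the unitary orbit). The battery capacity is $\mathcal{C}(\rho)=\mathrm{tr}(\rho^{ac}H)-\mathrm{tr}(\rho^pH)$. For an $n$-qubit pure state $|\psi\rangle$ and $X\subseteq[n]$, write $\rho_X=\mathrm{tr}_{X^c}|\psi\rangle\langle\psi|$ ($X^c=[n]\setminus X$). The ergotropic gap is $\Delta_{X|X^c}(|\psi\rangle)=\mathrm{tr}(\rho_X^pH_X)+\mathrm{tr}(\rho_{X^c}^pH_{X^c})$, and the battery capacity gap is $\Delta^{cg}_{X|X^c}(|\psi\rangle)=\mathcal{C}(|\psi\rangle\langle\psi|)-\mathcal{C}(\rho_X)-\mathcal{C}(\rho_{X^c})$, where $\mathcal{C}(|\psi\rangle\langle\psi|)$ is taken with respect to $H_X\otimes\mathbb{I}+\mathbb{I}\otimes H_{X^c}$; both gaps are set to $0$ when $X=\emptyset$ or $X=[n]$. $\mathcal{P}(s)$ is the power set of $s$. The ergotropic-gap concentratable entanglement is $M^{(s)}_E(|\psi\rangle)=2^{-|s|}\sum_{X\in\mathcal{P}(s)}\Delta_{X|X^c}(|\psi\rangle)$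 and the battery capacity-gap concentratable entanglement is $M^{(s)}_B(|\psi\rangle)=2^{-|s|}\sum_{X\in\mathcal{P}(s)}\Delta^{cg}_{X|X^c}(|\psi\rangle)$. *)

theory Defs
  imports "Jordan_Normal_Form.Schur_Decomposition" "HOL-Library.Multiset"
begin

(* Qubits are labelled 0..<n.  A computational-basis index k < 2^n assigns to
   qubit i the bit  odd (k div 2^i).  For a set X of qubits, an index a < 2^(card X)
   assigns to the m-th smallest element of X the bit  odd (a div 2^m). *)

definition qbit :: "nat \<Rightarrow> nat \<Rightarrow> nat" where
  "qbit k i = (if odd (k div 2 ^ i) then 1 else 0)"

definition restr :: "nat set \<Rightarrow> nat \<Rightarrow> nat" where
  "restr X k = (\<Sum>m<card X. qbit k (sorted_list_of_set X ! m) * 2 ^ m)"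

definition compl_q :: "nat \<Rightarrow> nat set \<Rightarrow> nat set" where
  "compl_q n X = {0..<n} - X"

definition pure_dm :: "complex vec \<Rightarrow> complex mat" where
  "pure_dm psi = mat (dim_vec psi) (dim_vec psi) (\<lambda>(k,l). psi $ k * cnj (psi $ l))"

(* reduced state rho_X = tr_{X^c} |psi><psi| of an n-qubit state *)
definition reduced :: "nat \<Rightarrow> complex vec \<Rightarrow> nat set \<Rightarrow> complex mat" where
  "reduced n psi X = mat (2 ^ card X) (2 ^ card X) (\<lambda>(a,b).
     \<Sum>k<2^n. \<Sum>l<2^n.
       (if restr X k = a \<and> restr X l = b \<and> restr (compl_q n X) k = restr (compl_q n X) l
        then psi $ k * cnj (psi $ l) else 0))"

(* H_X \<otimes> I + I \<otimes> H_{X^c} on the n-qubit space (computational ordering) *)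
definition kron_sum :: "nat \<Rightarrow> nat set \<Rightarrow> complex mat \<Rightarrow> complex mat \<Rightarrow> complex mat" where
  "kron_sum n X HA HB = mat (2 ^ n) (2 ^ n) (\<lambda>(k,l).
     (if restr (compl_q n X) k = restr (compl_q n X) l then HA $$ (restr X k, restr X l) else 0)
   + (if restr X k = restr X l then HB $$ (restr (compl_q n X) k, restr (compl_q n X) l) else 0))"

definition eigs :: "complex mat \<Rightarrow> real list" where
  "eigs A = sorted_list_of_multiset (image_mset Re (proots (char_poly A)))"

(* tr(rho^p H): p_j descending paired with eps_j ascending *)
definition passive_energy :: "complex mat \<Rightarrow> complex mat \<Rightarrow> real" where
  "passive_energy \<rho> H = (\<Sum>j<dim_row \<rho>. rev (eigs \<rho>) ! j * eigs H ! j)"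

(* tr(rho^ac H): p_{d-1-j} paired with eps_j *)
definition active_energy :: "complex mat \<Rightarrow> complex mat \<Rightarrow> real" where
  "active_energy \<rho> H = (\<Sum>j<dim_row \<rho>. eigs \<rho> ! j * eigs H ! j)"

definition battery_capacity :: "complex mat \<Rightarrow> complex mat \<Rightarrow> real" where
  "battery_capacity \<rho> H = active_energy \<rho> H - passive_energy \<rho> H"

(* ergotropic gap; HA X is H_X, HB X is H_{X^c} *)
definition ergo_gap :: "nat \<Rightarrow> complex vec \<Rightarrow> (nat set \<Rightarrow> complex mat) \<Rightarrow> (nat set \<Rightarrow> complex mat)
   \<Rightarrow> nat set \<Rightarrow> real" where
  "ergo_gap n psi HA HB X = (if X = {} \<or> X = {0..<n} then 0 else
     passive_energy (reduced n psi X) (HA X)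
   + passive_energy (reduced n psi (compl_q n X)) (HB X))"

definition cap_gap :: "nat \<Rightarrow> complex vec \<Rightarrow> (nat set \<Rightarrow> complex mat) \<Rightarrow> (nat set \<Rightarrow> complex mat)
   \<Rightarrow> nat set \<Rightarrow> real" where
  "cap_gap n psi HA HB X = (if X = {} \<or> X = {0..<n} then 0 else
     battery_capacity (pure_dm psi) (kron_sum n X (HA X) (HB X))
   - battery_capacity (reduced n psi X) (HA X)
   - battery_capacity (reduced n psi (compl_q n X)) (HB X))"

definition M_E :: "nat \<Rightarrow> complex vec \<Rightarrow> (nat set \<Rightarrow> complex mat) \<Rightarrow> (nat set \<Rightarrow> complex mat)
   \<Rightarrow> nat set \<Rightarrow> real" where
  "M_E n psi HA HB s = (\<Sum>X\<in>Pow s. ergo_gap n psi HA HB X) / 2 ^ card s"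

definition M_B :: "nat \<Rightarrow> complex vec \<Rightarrow> (nat set \<Rightarrow> complex mat) \<Rightarrow> (nat set \<Rightarrow> complex mat)
   \<Rightarrow> nat set \<Rightarrow> real" where
  "M_B n psi HA HB s = (\<Sum>X\<in>Pow s. cap_gap n psi HA HB X) / 2 ^ card s"

definition unitary_mat :: "nat \<Rightarrow> complex mat \<Rightarrow> bool" where
  "unitary_mat d U \<longleftrightarrow> U \<in> carrier_mat d d \<and> U * mat_adjoint U = 1\<^sub>m d"

(* H = sum_j j*e |e_j><e_j| for an orthonormal basis (e_j), i.e. H = U diag(0,e,2e,...) U^dagger *)
definition equispaced_ham :: "nat \<Rightarrow> real \<Rightarrow> complex mat \<Rightarrow> bool" where
  "equispaced_ham d e H \<longleftrightarrow> (\<exists>U. unitary_mat d U \<and>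
     H = U * mat d d (\<lambda>(i,j). if i = j then complex_of_real (real i * e) else 0) * mat_adjoint U)"

end

theory Submission
  imports Defs
begin

(* For an equispaced Hamiltonian the spectrum 0, e, ..., (d-1) e is invariant under
   j \<mapsto> d-1-j, so the active and passive energies of any state add up to (d-1) e and the
   capacity of rho_X is (d_X - 1) e^X - 2 tr(rho_X^p H_X).  A pure state has spectrum
   (0, ..., 0, 1), so its capacity is the spectral width of H_X \<otimes> I + I \<otimes> H_{X^c},
   namely (d_X - 1) e^X + (d_{X^c} - 1) e^{X^c}.  Subtracting, the capacity gap is twice the
   ergotropic gap, and averaging over P(s) gives M_B = 2 M_E. *)

section \<open>Splitting basis indices along a bipartition\<close>

lemma sum_binary_digits_less:
  fixes b :: "nat \<Rightarrow> nat"
  assumes "\<And>m. m < N \<Longrightarrow> b m \<le> 1"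
  shows "(\<Sum>m<N. b m * 2^m) < 2^N"
  using assms
proof (induction N)
  case (Suc N)
  have "(\<Sum>m<N. b m * 2^m) < 2^N" using Suc by auto
  moreover have "b N \<le> 1" using Suc.prems[of N] by simp
  ultimately show ?case by (cases "b N") auto
qed simp

lemma odd_sum_binary_digits_div_iff:
  fixes b :: "nat \<Rightarrow> nat"
  assumes "\<And>m. m < N \<Longrightarrow> b m \<le> 1" and "j < N"
  shows "odd ((\<Sum>m<N. b m * 2^m) div 2^j) \<longleftrightarrow> b j = 1"
  using assms
proof (induction N)
  case (Suc N)
  define S where "S = (\<Sum>m<N. b m * 2^m)"
  have S_less: "S < 2^N"
    unfolding S_def using Suc.prems by (intro sum_binary_digits_less) auto
  have sum_Suc: "(\<Sum>m<Suc N. b m * 2^m) = S + b N * 2^N"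
    unfolding S_def by simp
  show ?case
  proof (cases "j = N")
    case True
    have "(S + b N * 2^N) div 2^N = b N" using S_less by simp
    then show ?thesis using sum_Suc True Suc.prems(1)[of N] by (cases "b N") auto
  next
    case False
    then have "j < N" using Suc.prems by simp
    then have "(2::nat)^N = 2^(N-j) * 2^j" by (simp flip: power_add)
    then have "(S + b N * 2^N) div 2^j = S div 2^j + b N * 2^(N-j)"
      by (simp add: mult.assoc[symmetric])
    moreover have "even (b N * 2^(N-j))" using \<open>j < N\<close> by simp
    ultimately have "odd ((S + b N * 2^N) div 2^j) \<longleftrightarrow> odd (S div 2^j)" by simp
    then show ?thesis using Suc.IH[OF _ \<open>j < N\<close>] Suc.prems(1) sum_Suc S_def by simp
  qed
qed simp

lemma qbit_le_1: "qbit k i \<le> 1"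
  unfolding qbit_def by simp

lemma restr_less: "restr X k < 2 ^ card X"
  unfolding restr_def by (rule sum_binary_digits_less) (metis One_nat_def qbit_le_1)

lemma restr_0 [simp]: "restr X 0 = 0"
  unfolding restr_def qbit_def by simp

lemma odd_restr_div_iff:
  assumes "m < card X"
  shows "odd (restr X k div 2^m) \<longleftrightarrow> odd (k div 2 ^ (sorted_list_of_set X ! m))"
  unfolding restr_def
  using odd_sum_binary_digits_div_iff[of "card X" "\<lambda>m. qbit k (sorted_list_of_set X ! m)" m] assms
  by (simp add: qbit_le_1 qbit_def)

lemma restr_eq_imp_bit_eq:
  assumes "restr X k = restr X l" "i \<in> X" "finite X"
  shows "bit k i \<longleftrightarrow> bit l i"
proof -
  have "i \<in> set (sorted_list_of_set X)" using assms by simp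
  then obtain m where m: "m < length (sorted_list_of_set X)" "sorted_list_of_set X ! m = i"
    by (metis in_set_conv_nth)
  then have "m < card X" by simp
  then show ?thesis
    using odd_restr_div_iff[of m X k] odd_restr_div_iff[of m X l] m assms(1)
    by (simp add: bit_nat_def)
qed

lemma compl_q_subset: "compl_q n X \<subseteq> {0..<n}"
  unfolding compl_q_def by auto

lemma card_add_card_compl_q:
  assumes "X \<subseteq> {0..<n}"
  shows "card X + card (compl_q n X) = n"
  using assms unfolding compl_q_def
  by (metis card_Diff_subset card_atLeastLessThan diff_zero finite_atLeastLessThan finite_subset
      le_add_diff_inverse card_mono)

lemma restr_compl_q_inj:
  assumes "X \<subseteq> {0..<n}" "k < 2^n" "l < 2^n"
    and "restr X k = restr X l" "restr (compl_q n X) k = restr (compl_q n X) l"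
  shows "k = l"
proof (rule bit_eqI)
  fix i
  show "bit k i = bit l i"
  proof (cases "i < n")
    case True
    then have "i \<in> X \<or> i \<in> compl_q n X" by (auto simp: compl_q_def)
    then show ?thesis
      using restr_eq_imp_bit_eq[OF assms(4)] restr_eq_imp_bit_eq[OF assms(5)] assms(1)
      by (meson finite_atLeastLessThan finite_subset compl_q_subset)
  next
    case False
    then have "(2::nat)^n \<le> 2^i" by simp
    then have "k < 2^i" "l < 2^i" using assms(2,3) by linarith+
    then show ?thesis by (simp add: bit_nat_def)
  qed
qed

lemma bij_betw_restr_compl_q:
  assumes "X \<subseteq> {0..<n}"
  shows "bij_betw (\<lambda>k. (restr X k, restr (compl_q n X) k)) {..<2^n}
           ({..<2^card X} \<times> {..<2^card (compl_q n X)})"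
proof -
  let ?f = "\<lambda>k. (restr X k, restr (compl_q n X) k)"
  have inj: "inj_on ?f {..<2^n}"
    by (intro inj_onI) (use restr_compl_q_inj[OF assms] in auto)
  have "card (?f ` {..<2^n}) = card ({..<(2::nat)^card X} \<times> {..<(2::nat)^card (compl_q n X)})"
    using card_image[OF inj] card_add_card_compl_q[OF assms]
    by (simp add: card_cartesian_product flip: power_add)
  moreover have "?f ` {..<2^n} \<subseteq> {..<2^card X} \<times> {..<2^card (compl_q n X)}"
    using restr_less by auto
  ultimately have "?f ` {..<2^n} = {..<2^card X} \<times> {..<2^card (compl_q n X)}"
    by (intro card_subset_eq) auto
  then show ?thesis using inj unfolding bij_betw_def by simp
qed

lemma sum_split_restr:
  assumes "X \<subseteq> {0..<n}"
  shows "(\<Sum>k<2^n. g (restr X k) (restr (compl_q n X) k))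
       = (\<Sum>a<2^card X. \<Sum>b<2^card (compl_q n X). g a b)"
proof -
  have "(\<Sum>k<2^n. g (restr X k) (restr (compl_q n X) k))
      = (\<Sum>p\<in>{..<2^card X} \<times> {..<2^card (compl_q n X)}. case_prod g p)"
    using sum.reindex_bij_betw[OF bij_betw_restr_compl_q[OF assms], of "case_prod g"] by simp
  then show ?thesis by (simp add: sum.cartesian_product)
qed

section \<open>Spectra of complex matrices\<close>

lemma dim_mat_adjoint [simp]:
  "dim_row (mat_adjoint A) = dim_col A" "dim_col (mat_adjoint A) = dim_row A"
  unfolding mat_adjoint_def by (simp_all add: mat_of_rows_def)

lemma mat_adjoint_carrier: "W \<in> carrier_mat d d \<Longrightarrow> mat_adjoint W \<in> carrier_mat d d"
  unfolding carrier_mat_def by simp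

lemma mat_adjoint_index:
  "W \<in> carrier_mat d d \<Longrightarrow> i < d \<Longrightarrow> j < d \<Longrightarrow> mat_adjoint W $$ (i,j) = cnj (W $$ (j,i))"
  unfolding mat_adjoint_def by (auto simp: mat_of_rows_def)

definition mat_trace :: "complex mat \<Rightarrow> complex" where
  "mat_trace A = (\<Sum>i<dim_row A. A $$ (i,i))"

lemma mat_trace_mult_comm:
  assumes "A \<in> carrier_mat n m" "B \<in> carrier_mat m n"
  shows "mat_trace (A * B) = mat_trace (B * A)"
proof -
  have "mat_trace (A * B) = (\<Sum>i<n. \<Sum>k<m. A $$ (i,k) * B $$ (k,i))"
    using assms unfolding mat_trace_def by (simp add: scalar_prod_def atLeast0LessThan)
  also have "\<dots> = (\<Sum>k<m. \<Sum>i<n. B $$ (k,i) * A $$ (i,k))"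
    by (subst sum.swap) (simp add: mult.commute)
  also have "\<dots> = mat_trace (B * A)"
    using assms unfolding mat_trace_def by (simp add: scalar_prod_def atLeast0LessThan)
  finally show ?thesis .
qed

lemma similar_mat_trace_eq:
  assumes "similar_mat A B"
  shows "mat_trace A = mat_trace B"
proof -
  from similar_matD[OF assms] obtain n P Q where
    c: "{A,B,P,Q} \<subseteq> carrier_mat n n" and QP: "Q * P = 1\<^sub>m n" and AB: "A = P * B * Q"
    by blast
  have "mat_trace A = mat_trace (P * (B * Q))"
    using AB c by (simp add: assoc_mult_mat[of P n n B n Q n])
  also have "\<dots> = mat_trace ((B * Q) * P)"
    using c by (intro mat_trace_mult_comm) auto
  also have "\<dots> = mat_trace (B * (Q * P))"
    using c by (simp add: assoc_mult_mat[of B n n Q n P n])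
  finally show ?thesis using QP c right_mult_one_mat[of B n n] by auto
qed

lemma proots_prod_linear_factors: "proots (\<Prod>a\<leftarrow>as. [:- a, 1:]) = mset (as :: complex list)"
proof (induction as)
  case (Cons a as)
  have "(\<Prod>a\<leftarrow>as. [:- a, 1:]) \<noteq> (0 :: complex poly)" by auto
  then have "proots ([:- a, 1:] * (\<Prod>a\<leftarrow>as. [:- a, 1:]))
      = proots [:- a, 1:] + proots (\<Prod>a\<leftarrow>as. [:- a, 1:])"
    by (intro proots_mult) auto
  then show ?case using Cons proots_linear_factor[of "-a"] by simp
qed simp

lemma char_poly_roots_sum_trace:
  assumes A: "A \<in> carrier_mat d d"
  obtains as where "proots (char_poly A) = mset as" "length as = d" "sum_list as = mat_trace A"
proof -
  obtain es where es: "char_poly A = (\<Prod>a\<leftarrow>es. [:- a, 1:])"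
    using char_poly_factorized[OF A] by blast
  obtain B where B: "B \<in> carrier_mat d d" "upper_triangular B" "similar_mat A B"
    using schur_upper_triangular[OF A es] by blast
  have "char_poly A = (\<Prod>a\<leftarrow>diag_mat B. [:- a, 1:])"
    using char_poly_similar[OF B(3)] char_poly_upper_triangular[OF B(1,2)] by simp
  then have "proots (char_poly A) = mset (diag_mat B)"
    by (simp add: proots_prod_linear_factors)
  moreover have "sum_list (diag_mat B) = mat_trace A"
    using similar_mat_trace_eq[OF B(3)]
    unfolding diag_mat_def mat_trace_def by (simp add: sum_list_sum_nth atLeast0LessThan)
  moreover have "length (diag_mat B) = d" using B by (simp add: diag_mat_def)
  ultimately show ?thesis using that by blast
qed

lemma eigs_char_poly_roots:
  assumes A: "A \<in> carrier_mat d d"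
  obtains as where "eigs A = sort (map Re as)" "length as = d" "sum_list as = mat_trace A"
    "\<And>a. a \<in> set as \<Longrightarrow> poly (char_poly A) a = 0"
proof -
  obtain as where as: "proots (char_poly A) = mset as" "length as = d" "sum_list as = mat_trace A"
    using char_poly_roots_sum_trace[OF A] by blast
  have "char_poly A \<noteq> 0" using degree_monic_char_poly[OF A] by auto
  moreover have "a \<in># proots (char_poly A)" if "a \<in> set as" for a
    using that as(1) by simp
  ultimately have "poly (char_poly A) a = 0" if "a \<in> set as" for a
    using that by simp
  moreover have "eigs A = sort (map Re as)"
    unfolding eigs_def as(1) mset_map[symmetric] sorted_list_of_multiset_mset ..
  ultimately show ?thesis using that as by blast
qed

lemma length_eigs: "A \<in> carrier_mat d d \<Longrightarrow> length (eigs A) = d"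
  by (metis eigs_char_poly_roots length_map length_sort)

lemma sum_list_eigs:
  assumes "A \<in> carrier_mat d d"
  shows "sum_list (eigs A) = Re (mat_trace A)"
proof -
  obtain as where as: "eigs A = sort (map Re as)" "sum_list as = mat_trace A"
    using eigs_char_poly_roots[OF assms] by metis
  have "sum_list (sort (map Re as)) = sum_list (map Re as)"
    by (metis mset_sort sum_mset_sum_list)
  also have "\<dots> = Re (sum_list as)" by (induction as) auto
  finally show ?thesis using as by simp
qed

definition real_diag_mat :: "nat \<Rightarrow> (nat \<Rightarrow> real) \<Rightarrow> complex mat" where
  "real_diag_mat d f = mat d d (\<lambda>(i,j). if i = j then complex_of_real (f i) else 0)"

lemma real_diag_mat_carrier [simp]: "real_diag_mat d f \<in> carrier_mat d d"
  unfolding real_diag_mat_def by simp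

lemma equispaced_hamE:
  assumes "equispaced_ham d e H"
  obtains U where "unitary_mat d U" "H = U * real_diag_mat d (\<lambda>i. real i * e) * mat_adjoint U"
  using assms unfolding equispaced_ham_def real_diag_mat_def by blast

lemma eigs_unitary_diag:
  assumes W: "unitary_mat d W"
  shows "eigs (W * real_diag_mat d f * mat_adjoint W) = sort (map f [0..<d])"
proof -
  let ?D = "real_diag_mat d f"
  have Wc: "W \<in> carrier_mat d d" and WW: "W * mat_adjoint W = 1\<^sub>m d"
    using W unfolding unitary_mat_def by auto
  have Wa: "mat_adjoint W \<in> carrier_mat d d" using mat_adjoint_carrier[OF Wc] .
  have H: "W * ?D * mat_adjoint W \<in> carrier_mat d d"
    using Wc Wa by (meson mult_carrier_mat real_diag_mat_carrier)
  have "similar_mat (W * ?D * mat_adjoint W) ?D"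
    by (rule similar_matI[of _ _ W "mat_adjoint W" d])
      (use H Wc Wa WW mat_mult_left_right_inverse[OF Wc Wa WW] in simp_all)
  then have "char_poly (W * ?D * mat_adjoint W) = (\<Prod>a\<leftarrow>diag_mat ?D. [:- a, 1:])"
    using char_poly_upper_triangular[of ?D d]
    by (simp add: char_poly_similar real_diag_mat_def upper_triangular_def)
  then have "proots (char_poly (W * ?D * mat_adjoint W)) = mset (diag_mat ?D)"
    by (simp add: proots_prod_linear_factors)
  moreover have "diag_mat ?D = map (\<lambda>i. complex_of_real (f i)) [0..<d]"
    unfolding diag_mat_def real_diag_mat_def by simp
  ultimately show ?thesis
    unfolding eigs_def by (simp flip: mset_map add: comp_def)
qed

lemma sort_nth_0_eq_least:
  fixes xs :: "real list"
  assumes "\<And>x. x \<in> set xs \<Longrightarrow> m \<le> x" "m \<in> set xs"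
  shows "sort xs ! 0 = m"
proof -
  obtain i where i: "i < length xs" "sort xs ! i = m"
    using assms(2) by (metis in_set_conv_nth length_sort set_sort)
  then have "sort xs ! 0 \<le> m" using sorted_nth_mono[OF sorted_sort, of 0 i xs] by simp
  moreover have "sort xs ! 0 \<in> set xs" using i(1) by (metis gr_zeroI less_zeroE length_sort nth_mem set_sort)
  ultimately show ?thesis using assms(1) by force
qed

lemma sort_nth_last_eq_greatest:
  fixes xs :: "real list"
  assumes "\<And>x. x \<in> set xs \<Longrightarrow> x \<le> m" "m \<in> set xs"
  shows "sort xs ! (length xs - 1) = m"
proof -
  obtain i where i: "i < length xs" "sort xs ! i = m"
    using assms(2) by (metis in_set_conv_nth length_sort set_sort)
  then have "m \<le> sort xs ! (length xs - 1)"
    using sorted_nth_mono[OF sorted_sort, of i "length xs - 1" xs] by simp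
  moreover have "sort xs ! (length xs - 1) \<in> set xs"
    using i(1) by (metis diff_less length_pos_if_in_set length_sort less_one nth_mem set_sort assms(2))
  ultimately show ?thesis using assms(1) by force
qed

section \<open>Battery capacity\<close>

lemma battery_capacity_symmetric_spectrum:
  assumes rho: "rho \<in> carrier_mat d d" "sum_list (eigs rho) = 1"
    and sym: "\<And>j. j < d \<Longrightarrow> eigs H ! j + eigs H ! (d - 1 - j) = c"
  shows "battery_capacity rho H = c - 2 * passive_energy rho H"
proof -
  define p where "p = eigs rho"
  define E where "E = eigs H"
  have len: "length p = d" unfolding p_def using length_eigs[OF rho(1)] .
  have dim: "dim_row rho = d" using rho by simp
  have "passive_energy rho H = (\<Sum>j<d. p ! (d - 1 - j) * E ! j)"
    unfolding passive_energy_def dim p_def[symmetric] E_def[symmetric]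
    by (intro sum.cong) (auto simp: rev_nth len)
  also have "\<dots> = (\<Sum>j<d. (\<lambda>i. p ! i * E ! (d - 1 - i)) (d - Suc j))"
    by (intro sum.cong) auto
  also have "\<dots> = (\<Sum>j<d. p ! j * E ! (d - 1 - j))"
    by (rule sum.nat_diff_reindex)
  finally have passive_reflected: "passive_energy rho H = (\<Sum>j<d. p ! j * E ! (d - 1 - j))" .
  have "active_energy rho H + passive_energy rho H = (\<Sum>j<d. p ! j * c)"
    unfolding passive_reflected active_energy_def dim p_def[symmetric] E_def[symmetric]
      sum.distrib[symmetric]
    using sym unfolding E_def by (intro sum.cong) (auto simp flip: distrib_left)
  also have "\<dots> = c"
    using rho(2) len unfolding p_def[symmetric]
    by (simp add: sum_distrib_right[symmetric] sum_list_sum_nth atLeast0LessThan)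
  finally show ?thesis unfolding battery_capacity_def by simp
qed

lemma eigs_equispaced_ham:
  assumes "equispaced_ham d e H" "e \<ge> 0"
  shows "eigs H = map (\<lambda>i. real i * e) [0..<d]"
proof -
  obtain U where "unitary_mat d U" "H = U * real_diag_mat d (\<lambda>i. real i * e) * mat_adjoint U"
    using assms(1) by (rule equispaced_hamE)
  then have "eigs H = sort (map (\<lambda>i. real i * e) [0..<d])"
    by (simp add: eigs_unitary_diag)
  also have "\<dots> = map (\<lambda>i. real i * e) [0..<d]"
    using assms(2) by (intro sorted_sort_id) (auto simp: sorted_iff_nth_mono intro: mult_right_mono)
  finally show ?thesis .
qed

lemma battery_capacity_equispaced_ham:
  assumes "rho \<in> carrier_mat d d" "sum_list (eigs rho) = 1" "equispaced_ham d e H" "e \<ge> 0"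
  shows "battery_capacity rho H = (real d - 1) * e - 2 * passive_energy rho H"
  using assms(1,2)
proof (rule battery_capacity_symmetric_spectrum)
  fix j assume "j < d"
  then show "eigs H ! j + eigs H ! (d - 1 - j) = (real d - 1) * e"
    using eigs_equispaced_ham[OF assms(3,4)] by (simp add: algebra_simps)
qed

lemma idempotent_mat_eigenvalue:
  fixes P :: "complex mat"
  assumes P: "P \<in> carrier_mat N N" and idem: "P * P = P" and root: "poly (char_poly P) a = 0"
  shows "a = 0 \<or> a = 1"
proof -
  have "eigenvalue P a" using eigenvalue_root_char_poly[OF P] root by simp
  then obtain v where v: "v \<in> carrier_vec N" "v \<noteq> 0\<^sub>v N" "P *\<^sub>v v = a \<cdot>\<^sub>v v"
    unfolding eigenvalue_def eigenvector_def using P by auto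
  have "a \<cdot>\<^sub>v v = (P * P) *\<^sub>v v" using idem v(3) by simp
  also have "\<dots> = P *\<^sub>v (a \<cdot>\<^sub>v v)" using P v by simp
  also have "\<dots> = (a * a) \<cdot>\<^sub>v v"
    using P v by (simp add: mult_mat_vec smult_smult_assoc)
  finally have "(a * a) \<cdot>\<^sub>v v = a \<cdot>\<^sub>v v" by simp
  moreover obtain i where i: "i < N" "v $ i \<noteq> 0"
    using v(1,2) by (metis eq_vecI carrier_vecD index_zero_vec)
  ultimately have "a * a * v $ i = a * v $ i"
    by (metis carrier_vecD index_smult_vec(1) v(1))
  then have "a * a = a" using i(2) by simp
  then show ?thesis by (metis mult_cancel_left2)
qed

lemma sorted_01_list_sum_1_nth:
  fixes L :: "real list"
  assumes sorted: "sorted L" and vals: "set L \<subseteq> {0, 1}" and sum: "sum_list L = 1"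
    and i: "i < length L"
  shows "L ! i = (if i = length L - 1 then 1 else 0)"
proof -
  define N where "N = length L"
  have val: "L ! j = 0 \<or> L ! j = 1" if "j < N" for j
    using vals that nth_mem unfolding N_def by blast
  have sum_nth: "(\<Sum>j<N. L ! j) = 1"
    using sum unfolding N_def by (simp add: sum_list_sum_nth atLeast0LessThan)
  have top: "L ! (N - 1) = 1"
  proof (rule ccontr)
    assume "L ! (N - 1) \<noteq> 1"
    then have "L ! j = 0" if "j < N" for j
      using val[OF that] val[of "N - 1"] that sorted_nth_mono[OF sorted, of j "N - 1"]
      unfolding N_def by fastforce
    then show False using sum_nth by simp
  qed
  have "L ! j = 0" if "j < N - 1" for j
  proof (rule ccontr)
    assume "L ! j \<noteq> 0"
    then have "L ! j = 1" using val[of j] that by auto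
    have "L ! j + L ! (N - 1) = (\<Sum>k\<in>{j, N - 1}. L ! k)" using that by simp
    also have "\<dots> \<le> (\<Sum>k<N. L ! k)"
      by (rule sum_mono2) (use that val in force)+
    finally show False using sum_nth top \<open>L ! j = 1\<close> by simp
  qed
  then show ?thesis using top i unfolding N_def by auto
qed

lemma mult_cnj_eq_cmod_sq: "z * cnj z = complex_of_real ((cmod z)\<^sup>2)"
  by (simp only: complex_norm_square)

lemma pure_dm_carrier: "dim_vec psi = N \<Longrightarrow> pure_dm psi \<in> carrier_mat N N"
  unfolding pure_dm_def by simp

lemma pure_dm_idempotent:
  assumes dim: "dim_vec psi = N" and norm: "(\<Sum>k<N. (cmod (psi $ k))\<^sup>2) = 1"
  shows "pure_dm psi * pure_dm psi = pure_dm psi"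
proof (rule eq_matI)
  have "(\<Sum>m<N. cnj (psi $ m) * psi $ m) = complex_of_real (\<Sum>m<N. (cmod (psi $ m))\<^sup>2)"
    by (simp add: mult_cnj_eq_cmod_sq mult.commute)
  then have inner: "(\<Sum>m<N. cnj (psi $ m) * psi $ m) = 1" using norm by simp
  fix k l assume "k < dim_row (pure_dm psi)" "l < dim_col (pure_dm psi)"
  then have kl: "k < N" "l < N" using dim by (auto simp: pure_dm_def)
  have "(pure_dm psi * pure_dm psi) $$ (k,l)
      = (\<Sum>m<N. psi $ k * cnj (psi $ m) * (psi $ m * cnj (psi $ l)))"
    using kl dim by (simp add: pure_dm_def scalar_prod_def atLeast0LessThan)
  also have "\<dots> = psi $ k * cnj (psi $ l) * (\<Sum>m<N. cnj (psi $ m) * psi $ m)"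
    by (simp add: sum_distrib_left algebra_simps)
  finally show "(pure_dm psi * pure_dm psi) $$ (k,l) = pure_dm psi $$ (k,l)"
    using inner kl dim by (simp add: pure_dm_def)
qed (auto simp: pure_dm_def)

lemma eigs_pure_dm_nth:
  assumes dim: "dim_vec psi = N" and norm: "(\<Sum>k<N. (cmod (psi $ k))\<^sup>2) = 1" and j: "j < N"
  shows "eigs (pure_dm psi) ! j = (if j = N - 1 then 1 else 0)"
proof -
  have P: "pure_dm psi \<in> carrier_mat N N" using pure_dm_carrier[OF dim] .
  obtain as where as: "eigs (pure_dm psi) = sort (map Re as)"
    "\<And>a. a \<in> set as \<Longrightarrow> poly (char_poly (pure_dm psi)) a = 0"
    using eigs_char_poly_roots[OF P] by metis
  have "Re a \<in> {0, 1}" if "a \<in> set as" for a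
    using idempotent_mat_eigenvalue[OF P pure_dm_idempotent[OF dim norm] as(2)[OF that]] by auto
  then have "set (eigs (pure_dm psi)) \<subseteq> {0, 1}"
    unfolding as(1) by auto
  moreover have "mat_trace (pure_dm psi) = complex_of_real (\<Sum>k<N. (cmod (psi $ k))\<^sup>2)"
    unfolding mat_trace_def using dim by (simp add: pure_dm_def mult_cnj_eq_cmod_sq)
  then have "sum_list (eigs (pure_dm psi)) = 1"
    using sum_list_eigs[OF P] norm by simp
  ultimately show ?thesis
    using sorted_01_list_sum_1_nth[of "eigs (pure_dm psi)" j] length_eigs[OF P] j as(1) by simp
qed

lemma battery_capacity_pure_dm:
  assumes dim: "dim_vec psi = N" and norm: "(\<Sum>k<N. (cmod (psi $ k))\<^sup>2) = 1" and "N > 0"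
  shows "battery_capacity (pure_dm psi) H = eigs H ! (N - 1) - eigs H ! 0"
proof -
  have dim_row: "dim_row (pure_dm psi) = N" using dim by (simp add: pure_dm_def)
  have len: "length (eigs (pure_dm psi)) = N" using length_eigs[OF pure_dm_carrier[OF dim]] .
  have "active_energy (pure_dm psi) H = (\<Sum>j<N. if j = N - 1 then eigs H ! j else 0)"
    unfolding active_energy_def dim_row
    by (intro sum.cong) (auto simp: eigs_pure_dm_nth[OF dim norm])
  moreover have "passive_energy (pure_dm psi) H = (\<Sum>j<N. if j = 0 then eigs H ! j else 0)"
    unfolding passive_energy_def dim_row
    by (intro sum.cong) (auto simp: rev_nth len eigs_pure_dm_nth[OF dim norm])
  ultimately show ?thesis using \<open>N > 0\<close> unfolding battery_capacity_def by simp
qed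

section \<open>The bipartition X | X^c\<close>

lemma reduced_carrier: "reduced n psi X \<in> carrier_mat (2^card X) (2^card X)"
  unfolding reduced_def by simp

lemma mat_trace_reduced:
  assumes X: "X \<subseteq> {0..<n}"
  shows "mat_trace (reduced n psi X) = complex_of_real (\<Sum>k<2^n. (cmod (psi $ k))\<^sup>2)"
proof -
  let ?C = "compl_q n X"
  let ?T = "\<lambda>a k l. if restr X k = a \<and> restr X l = a \<and> restr ?C k = restr ?C l
        then psi $ k * cnj (psi $ l) else 0"
  have "mat_trace (reduced n psi X) = (\<Sum>k<2^n. \<Sum>l<2^n. \<Sum>a<2^card X. ?T a k l)"
    unfolding mat_trace_def reduced_def by (simp add: sum.swap[of _ "{..<2^card X}"])
  also have "\<dots> = (\<Sum>k<2^n. \<Sum>l<2^n. if l = k then psi $ k * cnj (psi $ l) else 0)"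
  proof (intro sum.cong refl)
    fix k l assume "k \<in> {..<(2::nat)^n}" "l \<in> {..<(2::nat)^n}"
    then have same: "restr X l = restr X k \<and> restr ?C k = restr ?C l \<longleftrightarrow> l = k"
      using restr_compl_q_inj[OF X, of k l] by auto
    have "(\<Sum>a<2^card X. ?T a k l) = (\<Sum>a<2^card X. if a = restr X k then
        (if restr X l = restr X k \<and> restr ?C k = restr ?C l then psi $ k * cnj (psi $ l) else 0)
        else 0)"
      by (intro sum.cong) auto
    then show "(\<Sum>a<2^card X. ?T a k l) = (if l = k then psi $ k * cnj (psi $ l) else 0)"
      using restr_less[of X k] same by simp
  qed
  also have "\<dots> = complex_of_real (\<Sum>k<2^n. (cmod (psi $ k))\<^sup>2)"
    by (simp add: mult_cnj_eq_cmod_sq)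
  finally show ?thesis .
qed

lemma sum_list_eigs_reduced:
  assumes "X \<subseteq> {0..<n}" and "(\<Sum>k<2^n. (cmod (psi $ k))\<^sup>2) = 1"
  shows "sum_list (eigs (reduced n psi X)) = 1"
  using sum_list_eigs[OF reduced_carrier] mat_trace_reduced[OF assms(1)] assms(2) by simp

lemma mult_mat_adjoint_index:
  assumes "W \<in> carrier_mat d d" "V \<in> carrier_mat d d" "i < d" "j < d"
  shows "(W * mat_adjoint V) $$ (i,j) = (\<Sum>m<d. W $$ (i,m) * cnj (V $$ (j,m)))"
  using assms mat_adjoint_carrier[OF assms(2)]
  by (simp add: scalar_prod_def atLeast0LessThan mat_adjoint_index)

lemma unitary_mat_rows_orthonormal:
  assumes "unitary_mat d U" "i < d" "j < d"
  shows "(\<Sum>m<d. U $$ (i,m) * cnj (U $$ (j,m))) = (if i = j then 1 else 0)"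
  using assms mult_mat_adjoint_index[of U d U i j] unfolding unitary_mat_def by simp

lemma unitary_diag_index:
  assumes "W \<in> carrier_mat d d" "i < d" "j < d"
  shows "(W * real_diag_mat d f * mat_adjoint W) $$ (i,j)
     = (\<Sum>m<d. W $$ (i,m) * complex_of_real (f m) * cnj (W $$ (j,m)))"
proof -
  have "(W * real_diag_mat d f) $$ (i,m) = W $$ (i,m) * complex_of_real (f m)" if "m < d" for m
  proof -
    have "(W * real_diag_mat d f) $$ (i,m)
        = (\<Sum>k<d. W $$ (i,k) * (if k = m then complex_of_real (f k) else 0))"
      using assms that by (simp add: real_diag_mat_def scalar_prod_def atLeast0LessThan)
    then show ?thesis using that by (simp add: if_distrib cong: if_cong)
  qed
  then show ?thesis
    using assms mult_mat_adjoint_index[of "W * real_diag_mat d f" d W i j] by simp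
qed

text \<open>The operator A \<otimes> B on H_X \<otimes> H_{X^c}, in the qubit ordering used by kron_sum.\<close>

definition kron_split :: "nat \<Rightarrow> nat set \<Rightarrow> complex mat \<Rightarrow> complex mat \<Rightarrow> complex mat" where
  "kron_split n X A B = mat (2^n) (2^n) (\<lambda>(k,m).
     A $$ (restr X k, restr X m) * B $$ (restr (compl_q n X) k, restr (compl_q n X) m))"

lemma dim_kron_split [simp]:
  "dim_row (kron_split n X A B) = 2^n" "dim_col (kron_split n X A B) = 2^n"
  unfolding kron_split_def by simp_all

lemma kron_split_carrier: "kron_split n X A B \<in> carrier_mat (2^n) (2^n)"
  by auto

context
  fixes n :: nat and X :: "nat set" and UA UB :: "complex mat"
  assumes X: "X \<subseteq> {0..<n}"
    and UA: "unitary_mat (2^card X) UA"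
    and UB: "unitary_mat (2^card (compl_q n X)) UB"
begin

lemma kron_split_sandwich_index:
  assumes "k < 2^n" "l < 2^n"
  shows "(\<Sum>m<2^n. kron_split n X UA UB $$ (k,m) * g (restr X m) (restr (compl_q n X) m)
                     * cnj (kron_split n X UA UB $$ (l,m)))
    = (\<Sum>x<2^card X. \<Sum>y<2^card (compl_q n X).
         UA $$ (restr X k, x) * UB $$ (restr (compl_q n X) k, y) * g x y
         * cnj (UA $$ (restr X l, x) * UB $$ (restr (compl_q n X) l, y)))"
    (is "?lhs = (\<Sum>x<_. \<Sum>y<_. ?t x y)")
proof -
  have "?lhs = (\<Sum>m<2^n. ?t (restr X m) (restr (compl_q n X) m))"
    using assms by (intro sum.cong) (auto simp: kron_split_def)
  also have "\<dots> = (\<Sum>x<2^card X. \<Sum>y<2^card (compl_q n X). ?t x y)"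
    by (rule sum_split_restr[OF X])
  finally show ?thesis .
qed

lemma unitary_kron_split: "unitary_mat (2^n) (kron_split n X UA UB)"
  unfolding unitary_mat_def
proof (intro conjI kron_split_carrier eq_matI)
  let ?W = "kron_split n X UA UB"
  let ?a = "restr X" and ?b = "restr (compl_q n X)"
  fix k l assume "k < dim_row (1\<^sub>m (2^n))" "l < dim_col (1\<^sub>m (2^n) :: complex mat)"
  then have kl: "k < 2^n" "l < 2^n" by auto
  have "(?W * mat_adjoint ?W) $$ (k,l) = (\<Sum>m<2^n. ?W $$ (k,m) * 1 * cnj (?W $$ (l,m)))"
    using mult_mat_adjoint_index[OF kron_split_carrier kron_split_carrier kl] by simp
  also have "\<dots> = (\<Sum>x<2^card X. UA $$ (?a k, x) * cnj (UA $$ (?a l, x)))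
                * (\<Sum>y<2^card (compl_q n X). UB $$ (?b k, y) * cnj (UB $$ (?b l, y)))"
    using kron_split_sandwich_index[OF kl, of "\<lambda>_ _. 1"]
    by (simp add: sum_product algebra_simps)
  also have "\<dots> = (if ?a k = ?a l then 1 else 0) * (if ?b k = ?b l then 1 else 0)"
    using unitary_mat_rows_orthonormal[OF UA] unitary_mat_rows_orthonormal[OF UB] restr_less
    by simp
  also have "\<dots> = 1\<^sub>m (2^n) $$ (k,l)"
    using restr_compl_q_inj[OF X kl] kl by auto
  finally show "(?W * mat_adjoint ?W) $$ (k,l) = 1\<^sub>m (2^n) $$ (k,l)" .
qed simp_all

lemma kron_sum_unitary_diag:
  "kron_sum n X (UA * real_diag_mat (2^card X) fA * mat_adjoint UA)
                (UB * real_diag_mat (2^card (compl_q n X)) fB * mat_adjoint UB)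
   = kron_split n X UA UB * real_diag_mat (2^n) (\<lambda>k. fA (restr X k) + fB (restr (compl_q n X) k))
     * mat_adjoint (kron_split n X UA UB)"
  (is "kron_sum n X ?HA ?HB = ?W * ?D * mat_adjoint ?W")
proof (rule eq_matI)
  let ?a = "restr X" and ?b = "restr (compl_q n X)"
  let ?dA = "2^card X :: nat" and ?dB = "2^card (compl_q n X) :: nat"
  have UAc: "UA \<in> carrier_mat ?dA ?dA" and UBc: "UB \<in> carrier_mat ?dB ?dB"
    using UA UB unfolding unitary_mat_def by auto
  fix k l assume "k < dim_row (?W * ?D * mat_adjoint ?W)" "l < dim_col (?W * ?D * mat_adjoint ?W)"
  then have kl: "k < 2^n" "l < 2^n" by simp_all
  have "(?W * ?D * mat_adjoint ?W) $$ (k,l)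
      = (\<Sum>x<?dA. \<Sum>y<?dB. UA $$ (?a k, x) * UB $$ (?b k, y) * complex_of_real (fA x + fB y)
                             * cnj (UA $$ (?a l, x) * UB $$ (?b l, y)))"
    using unitary_diag_index[OF kron_split_carrier kl]
      kron_split_sandwich_index[OF kl, of "\<lambda>x y. complex_of_real (fA x + fB y)"] by simp
  also have "\<dots> = (\<Sum>x<?dA. \<Sum>y<?dB.
      (UA $$ (?a k, x) * complex_of_real (fA x) * cnj (UA $$ (?a l, x)))
        * (UB $$ (?b k, y) * cnj (UB $$ (?b l, y)))
    + (UA $$ (?a k, x) * cnj (UA $$ (?a l, x)))
        * (UB $$ (?b k, y) * complex_of_real (fB y) * cnj (UB $$ (?b l, y))))"
    by (intro sum.cong refl) (simp add: algebra_simps)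
  also have "\<dots> = (\<Sum>x<?dA. UA $$ (?a k, x) * complex_of_real (fA x) * cnj (UA $$ (?a l, x)))
                    * (\<Sum>y<?dB. UB $$ (?b k, y) * cnj (UB $$ (?b l, y)))
                + (\<Sum>x<?dA. UA $$ (?a k, x) * cnj (UA $$ (?a l, x)))
                    * (\<Sum>y<?dB. UB $$ (?b k, y) * complex_of_real (fB y) * cnj (UB $$ (?b l, y)))"
    by (simp add: sum.distrib sum_product)
  also have "\<dots> = ?HA $$ (?a k, ?a l) * (if ?b k = ?b l then 1 else 0)
                + (if ?a k = ?a l then 1 else 0) * ?HB $$ (?b k, ?b l)"
    using unitary_mat_rows_orthonormal[OF UA restr_less restr_less, of k l]
      unitary_mat_rows_orthonormal[OF UB restr_less restr_less, of k l]
      unitary_diag_index[OF UAc restr_less restr_less, of fA k l]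
      unitary_diag_index[OF UBc restr_less restr_less, of fB k l]
    by simp
  also have "\<dots> = kron_sum n X ?HA ?HB $$ (k,l)"
    unfolding kron_sum_def using kl by simp
  finally show "kron_sum n X ?HA ?HB $$ (k,l) = (?W * ?D * mat_adjoint ?W) $$ (k,l)" by simp
qed (simp_all add: kron_sum_def)

end

lemma eigs_kron_sum_equispaced_ham:
  assumes X: "X \<subseteq> {0..<n}"
    and HA: "equispaced_ham (2^card X) eA HA"
    and HB: "equispaced_ham (2^card (compl_q n X)) eB HB"
  shows "eigs (kron_sum n X HA HB)
       = sort (map (\<lambda>k. real (restr X k) * eA + real (restr (compl_q n X) k) * eB) [0..<2^n])"
proof -
  obtain UA where UA: "unitary_mat (2^card X) UA"
    "HA = UA * real_diag_mat (2^card X) (\<lambda>i. real i * eA) * mat_adjoint UA"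
    using HA by (rule equispaced_hamE)
  obtain UB where UB: "unitary_mat (2^card (compl_q n X)) UB"
    "HB = UB * real_diag_mat (2^card (compl_q n X)) (\<lambda>i. real i * eB) * mat_adjoint UB"
    using HB by (rule equispaced_hamE)
  show ?thesis
    unfolding UA(2) UB(2) kron_sum_unitary_diag[OF X UA(1) UB(1)]
    by (rule eigs_unitary_diag[OF unitary_kron_split[OF X UA(1) UB(1)]])
qed

lemma battery_capacity_pure_dm_kron_sum_equispaced:
  assumes dim: "dim_vec psi = 2^n" and norm: "(\<Sum>k<2^n. (cmod (psi $ k))\<^sup>2) = 1"
    and X: "X \<subseteq> {0..<n}" and eA: "eA \<ge> 0" and eB: "eB \<ge> 0"
    and HA: "equispaced_ham (2^card X) eA HA"
    and HB: "equispaced_ham (2^card (compl_q n X)) eB HB"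
  shows "battery_capacity (pure_dm psi) (kron_sum n X HA HB)
       = (real (2^card X) - 1) * eA + (real (2^card (compl_q n X)) - 1) * eB"
proof -
  let ?dA = "2^card X :: nat" and ?dB = "2^card (compl_q n X) :: nat"
  define f where "f k = real (restr X k) * eA + real (restr (compl_q n X) k) * eB" for k
  define M where "M = (real ?dA - 1) * eA + (real ?dB - 1) * eB"
  have spec: "eigs (kron_sum n X HA HB) = sort (map f [0..<2^n])"
    unfolding f_def by (rule eigs_kron_sum_equispaced_ham[OF X HA HB])
  have f_bounds: "0 \<le> f k \<and> f k \<le> M" for k
  proof -
    have "real (restr X k) \<le> real ?dA - 1" "real (restr (compl_q n X) k) \<le> real ?dB - 1"
      using restr_less[of X k] restr_less[of "compl_q n X" k] by (simp_all add: nat_less_real_le)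
    then show ?thesis
      unfolding f_def M_def using eA eB by (simp add: add_mono mult_right_mono)
  qed
  have "(?dA - 1, ?dB - 1) \<in> (\<lambda>k. (restr X k, restr (compl_q n X) k)) ` {..<2^n}"
    using bij_betw_restr_compl_q[OF X] unfolding bij_betw_def by simp
  then obtain m where "m < 2^n" "restr X m = ?dA - 1" "restr (compl_q n X) m = ?dB - 1"
    by auto
  then have "f m = M" "m \<in> set [0..<2^n]" unfolding f_def M_def by simp_all
  then have "M \<in> set (map f [0..<2^n])" by (metis image_eqI list.set_map)
  then have "eigs (kron_sum n X HA HB) ! (2^n - 1) = M"
    unfolding spec using f_bounds sort_nth_last_eq_greatest[of "map f [0..<2^n]" M] by auto
  moreover have "eigs (kron_sum n X HA HB) ! 0 = 0"
    unfolding spec using f_bounds image_eqI[of 0 f 0]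
    by (intro sort_nth_0_eq_least) (auto simp: f_def)
  ultimately show ?thesis
    using battery_capacity_pure_dm[OF dim norm] unfolding M_def by simp
qed

lemma cap_gap_eq_twice_ergo_gap:
  assumes dim: "dim_vec psi = 2^n" and norm: "(\<Sum>k<2^n. (cmod (psi $ k))\<^sup>2) = 1"
    and X: "X \<subseteq> {0..<n}" and eA: "eA \<ge> 0" and eB: "eB \<ge> 0"
    and HA: "equispaced_ham (2^card X) eA (HA X)"
    and HB: "equispaced_ham (2^card (compl_q n X)) eB (HB X)"
  shows "cap_gap n psi HA HB X = 2 * ergo_gap n psi HA HB X"
proof -
  have "battery_capacity (reduced n psi X) (HA X)
      = (real (2^card X) - 1) * eA - 2 * passive_energy (reduced n psi X) (HA X)"
    using reduced_carrier sum_list_eigs_reduced[OF X norm] HA eA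
    by (rule battery_capacity_equispaced_ham)
  moreover have "battery_capacity (reduced n psi (compl_q n X)) (HB X)
      = (real (2^card (compl_q n X)) - 1) * eB
        - 2 * passive_energy (reduced n psi (compl_q n X)) (HB X)"
    using reduced_carrier sum_list_eigs_reduced[OF compl_q_subset norm] HB eB
    by (rule battery_capacity_equispaced_ham)
  ultimately show ?thesis
    unfolding cap_gap_def ergo_gap_def
    using battery_capacity_pure_dm_kron_sum_equispaced[OF dim norm X eA eB HA HB] by simp
qed

theorem theorem1:
  fixes n :: nat and psi :: "complex vec" and s :: "nat set"
    and HA HB :: "nat set \<Rightarrow> complex mat" and epsA epsB :: "nat set \<Rightarrow> real"
  assumes "dim_vec psi = 2 ^ n"
    and "(\<Sum>k<2^n. (cmod (psi $ k))\<^sup>2) = 1"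
    and "s \<subseteq> {0..<n}"
    and "\<And>X. X \<in> Pow s \<Longrightarrow> X \<noteq> {} \<Longrightarrow> epsA X > 0 \<and> epsB X > 0"
    and "\<And>X. X \<in> Pow s \<Longrightarrow> X \<noteq> {} \<Longrightarrow> equispaced_ham (2 ^ card X) (epsA X) (HA X)"
    and "\<And>X. X \<in> Pow s \<Longrightarrow> X \<noteq> {} \<Longrightarrow>
           equispaced_ham (2 ^ card (compl_q n X)) (epsB X) (HB X)"
  shows "M_B n psi HA HB s = 2 * M_E n psi HA HB s
       \<and> (\<forall>X\<in>Pow s. X \<noteq> {} \<longrightarrow> cap_gap n psi HA HB X = 2 * ergo_gap n psi HA HB X)"
proof -
  have gap: "cap_gap n psi HA HB X = 2 * ergo_gap n psi HA HB X" if "X \<in> Pow s" for X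
  proof (cases "X = {}")
    case True
    then show ?thesis unfolding cap_gap_def ergo_gap_def by simp
  next
    case False
    then show ?thesis
      using that assms(3) assms(4-6)[OF that False]
      by (intro cap_gap_eq_twice_ergo_gap[OF assms(1,2)]) auto
  qed
  then have "M_B n psi HA HB s = (\<Sum>X\<in>Pow s. 2 * ergo_gap n psi HA HB X) / 2 ^ card s"
    unfolding M_B_def by simp
  also have "\<dots> = 2 * M_E n psi HA HB s"
    unfolding M_E_def by (simp add: sum_distrib_left)
  finally show ?thesis using gap by blast
qed

end
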